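(* Let $(\mathbf{x}^*,\mathbf{u}^* )$ be an optimal solution of problem (P), and let $\pi^*\in\mathbb{R}$ and $q_i$ ($i\in[N]$) be multipliers associated with it as described in the context. Then for each $i\in[N]$ and a.e. $t\in[0,T]$: $u_i^*(t)=1$ if $\pi^*-\pi(t)-\beta_i q_i(t)>0$; $u_i^*(t)=0$ if $\pi^*-\pi(t)-\beta_i q_i(t)<0$; $u_i^*(t)=\underline{u}_i(t)$ if $\pi^*-\pi(t)-\beta_i q_i(t)=0$ and $x_i^*(t)=L_i$; $u_i^*(t)=\overline{u}_i(t)$ if $\pi^*-\pi(t)-\beta_i q_i(t)=0$ and $x_i^*(t)=U_i$.
   Context: Data: integers $N\ge 1$, $T>0$, $E>0$, real constants $\alpha_i,\beta_i$, $L_i<U_i$, $x_{i0}$ ($i\in[N]:=\{1,\dots,N\}$), price $\pi:[0,T]\to\mathbb{R}$, ambient temperature $\hat{x}:[0,T]\to\mathbb{R}$ with $\hat{x}(t)>\max_iU_i$. Problem (P): over measurable $u_i:[0,T]\to[0,1]$, minimize $\int_0^T\pi(t)\sum_iu_i(t)dt$ subject to $\dot{x}_i=-\alpha_i(x_i-\hat{x}(t))-\beta_iu_i$ a.e., $x_i(0)=x_{i0}$; $\dot{x}_{N+1}=\sum_iu_i$, $x_{N+1}(0)=0$, $x_{N+1}(T)=E$; $L_i\le x_i(t)\le U_i$ for all $t$. Define $\overline{u}_i(t):=\frac{\alpha_i}{\beta_i}(\hat{x}(t)-U_i)$, $\underline{u}_i(t):=\frac{\alpha_i}{\beta_i}(\hat{x}(t)-L_i)$.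 Standing assumptions (A1): $L_i\le x_{i0}\le U_i$; $E\in[\overline{E},\underline{E})$, $\overline{E}:=\int_0^T\sum_i\max\{0,\overline{u}_i\}dt$, $\underline{E}:=\int_0^T\sum_i\min\{\underline{u}_i,1\}dt$; for all $i,t$: $-\alpha_i(L_i-\hat{x}(t))>0$ and $-\alpha_i(U_i-\hat{x}(t))-\beta_i<0$. (A2): $\pi,\hat{x}$ differentiable; $\pi$ not of form $Ae^{\alpha_it}+B$ on any subinterval of positive measure. Multipliers: a scalar $\pi^*$, absolutely continuous $p_i$, functions $q_i$ and positive Radon measures $\mu_i,\ell_i$ on $[0,T]$ with $\dot{p}_i=\alpha_iq_i$ a.e., $q_i(t)=p_i(t)+\mu_i([0,t))-\ell_i([0,t))$ for $t<T$, $q_i(T)=p_i(T)+\mu_i([0,T])-\ell_i([0,T])=0$, $\operatorname{supp}\ell_i\subset\{x_i^*=L_i\}$, $\operatorname{supp}\mu_i\subset\{x_i^*=U_i\}$, and for a.e. $t$ and all $u\in[0,1]^N$: $\sum_i(\pi^*-\pi(t)-\beta_iq_i(t))u_i^*(t)\ge\sum_i(\pi^*-\pi(t)-\beta_iq_i(t))u_i$. *)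

theory Defs
  imports "HOL-Analysis.Analysis"
begin

definition abs_continuous_on :: "real \<Rightarrow> real \<Rightarrow> (real \<Rightarrow> real) \<Rightarrow> bool" where
  "abs_continuous_on a b f \<longleftrightarrow>
     (\<forall>\<epsilon>>0. \<exists>\<delta>>0. \<forall>(n::nat) (c::nat \<Rightarrow> real) (d::nat \<Rightarrow> real).
        (\<forall>k<n. a \<le> c k \<and> c k \<le> d k \<and> d k \<le> b) \<and>
        (\<forall>k. Suc k < n \<longrightarrow> d k \<le> c (Suc k)) \<and>
        (\<Sum>k<n. d k - c k) < \<delta> \<longrightarrow>
        (\<Sum>k<n. \<bar>f (d k) - f (c k)\<bar>) < \<epsilon>)"

definition meas_support :: "real measure \<Rightarrow> real set" where
  "meas_support M = {t \<in> space M. \<forall>S. open S \<and> t \<in> S \<longrightarrow> emeasure M (S \<inter> space M) \<noteq> 0}"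

definition u_over :: "(nat \<Rightarrow> real) \<Rightarrow> (nat \<Rightarrow> real) \<Rightarrow> (real \<Rightarrow> real) \<Rightarrow> (nat \<Rightarrow> real) \<Rightarrow> nat \<Rightarrow> real \<Rightarrow> real" where
  "u_over \<alpha> \<beta> xh U i t = \<alpha> i / \<beta> i * (xh t - U i)"

definition u_under :: "(nat \<Rightarrow> real) \<Rightarrow> (nat \<Rightarrow> real) \<Rightarrow> (real \<Rightarrow> real) \<Rightarrow> (nat \<Rightarrow> real) \<Rightarrow> nat \<Rightarrow> real \<Rightarrow> real" where
  "u_under \<alpha> \<beta> xh L i t = \<alpha> i / \<beta> i * (xh t - L i)"

text \<open>Feasible pairs (u, x) of problem (P). Devices are indexed 0..N-1; the state x N plays
  the role of x_{N+1} (accumulated energy).\<close>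
definition feasible ::
  "nat \<Rightarrow> real \<Rightarrow> real \<Rightarrow> (nat \<Rightarrow> real) \<Rightarrow> (nat \<Rightarrow> real) \<Rightarrow> (nat \<Rightarrow> real) \<Rightarrow> (nat \<Rightarrow> real)
   \<Rightarrow> (nat \<Rightarrow> real) \<Rightarrow> (real \<Rightarrow> real)
   \<Rightarrow> (nat \<Rightarrow> real \<Rightarrow> real) \<Rightarrow> (nat \<Rightarrow> real \<Rightarrow> real) \<Rightarrow> bool" where
  "feasible N T E \<alpha> \<beta> L U x0 xh u x \<longleftrightarrow>
     (\<forall>i<N. set_borel_measurable lebesgue {0..T} (u i) \<and>
            (\<forall>t\<in>{0..T}. 0 \<le> u i t \<and> u i t \<le> 1)) \<and>
     (\<forall>i<N. abs_continuous_on 0 T (x i) \<and> x i 0 = x0 i \<and>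
            (AE t in lborel. t \<in> {0..T} \<longrightarrow>
               (x i has_real_derivative (- \<alpha> i * (x i t - xh t) - \<beta> i * u i t)) (at t within {0..T})) \<and>
            (\<forall>t\<in>{0..T}. L i \<le> x i t \<and> x i t \<le> U i)) \<and>
     abs_continuous_on 0 T (x N) \<and> x N 0 = 0 \<and>
     (AE t in lborel. t \<in> {0..T} \<longrightarrow>
        (x N has_real_derivative (\<Sum>i<N. u i t)) (at t within {0..T})) \<and>
     x N T = E"

definition cost :: "nat \<Rightarrow> real \<Rightarrow> (real \<Rightarrow> real) \<Rightarrow> (nat \<Rightarrow> real \<Rightarrow> real) \<Rightarrow> real" where
  "cost N T \<pi> u = (LINT t:{0..T}|lborel. \<pi> t * (\<Sum>i<N. u i t))"

definition optimal ::
  "nat \<Rightarrow> real \<Rightarrow> real \<Rightarrow> (nat \<Rightarrow> real) \<Rightarrow> (nat \<Rightarrow> real) \<Rightarrow> (nat \<Rightarrow> real) \<Rightarrow> (nat \<Rightarrow> real)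
   \<Rightarrow> (nat \<Rightarrow> real) \<Rightarrow> (real \<Rightarrow> real) \<Rightarrow> (real \<Rightarrow> real)
   \<Rightarrow> (nat \<Rightarrow> real \<Rightarrow> real) \<Rightarrow> (nat \<Rightarrow> real \<Rightarrow> real) \<Rightarrow> bool" where
  "optimal N T E \<alpha> \<beta> L U x0 xh \<pi> u x \<longleftrightarrow>
     feasible N T E \<alpha> \<beta> L U x0 xh u x \<and>
     (\<forall>u' x'. feasible N T E \<alpha> \<beta> L U x0 xh u' x' \<longrightarrow> cost N T \<pi> u \<le> cost N T \<pi> u')"

end

theory Submission
  imports Defs
begin

text \<open>Where the multiplier C_i = \<pi>* - \<pi>(t) - \<beta>_i q_i(t) is nonzero, the pointwise maximum
  condition forces u_i(t) to the corresponding end of [0,1], coordinate by coordinate. Where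
  the state sits on a bound at an interior time, it has a minimum or maximum there, so its
  derivative -\<alpha>_i (x_i - \<hat>x) - \<beta>_i u_i vanishes, which determines u_i(t) as the
  boundary control.\<close>

lemma sum_update_eq:
  fixes C u :: "'a \<Rightarrow> real"
  assumes "finite I" "i \<in> I"
  shows "(\<Sum>j\<in>I. C j * (u(i := a)) j) = (\<Sum>j\<in>I. C j * u j) + C i * (a - u i)"
proof -
  have "(\<Sum>j\<in>I. C j * (u(i := a)) j) = C i * a + (\<Sum>j\<in>I - {i}. C j * u j)"
    using assms by (simp add: sum.remove)
  also have "\<dots> = (\<Sum>j\<in>I. C j * u j) + C i * (a - u i)"
    using assms by (simp add: sum.remove algebra_simps)
  finally show ?thesis .
qed

lemma box_maximizer_coordinate:
  fixes C u :: "'a \<Rightarrow> real"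
  assumes "finite I" "i \<in> I" and u: "\<forall>j\<in>I. 0 \<le> u j \<and> u j \<le> 1"
    and max: "\<forall>v. (\<forall>j\<in>I. 0 \<le> v j \<and> v j \<le> 1) \<longrightarrow> (\<Sum>j\<in>I. C j * v j) \<le> (\<Sum>j\<in>I. C j * u j)"
  shows "C i > 0 \<Longrightarrow> u i = 1" and "C i < 0 \<Longrightarrow> u i = 0"
proof -
  have le: "C i * (a - u i) \<le> 0" if "0 \<le> a" "a \<le> 1" for a
    using max[rule_format, of "u(i := a)"] u that sum_update_eq[OF assms(1,2), of C u a] by auto
  have "0 \<le> u i" "u i \<le> 1" using u assms(2) by auto
  moreover have "C i * (1 - u i) \<le> 0" "C i * (0 - u i) \<le> 0" using le[of 1] le[of 0] by simp_all
  ultimately show "C i > 0 \<Longrightarrow> u i = 1" and "C i < 0 \<Longrightarrow> u i = 0"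
    by (auto simp: mult_le_0_iff zero_le_mult_iff)
qed

lemma has_real_derivative_interior_min_eq_0:
  assumes "(f has_real_derivative D) (at t within {a..b})" "a < t" "t < b"
    and "\<forall>s\<in>{a..b}. f t \<le> f s"
  shows "D = 0"
proof -
  have "(f has_real_derivative D) (at t)"
    using assms(1-3) at_within_interior[of t "{a..b}"] by simp
  moreover have "\<forall>s. \<bar>t - s\<bar> < min (t - a) (b - t) \<longrightarrow> f t \<le> f s"
    using assms(4) by (auto simp: abs_less_iff)
  ultimately show ?thesis
    using DERIV_local_min assms(2,3) by (metis diff_gt_0_iff_gt min_less_iff_conj)
qed

lemma has_real_derivative_interior_max_eq_0:
  assumes "(f has_real_derivative D) (at t within {a..b})" "a < t" "t < b"
    and "\<forall>s\<in>{a..b}. f s \<le> f t"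
  shows "D = 0"
  using has_real_derivative_interior_min_eq_0[of "\<lambda>s. - f s" "- D" t a b] assms
  by (auto intro: DERIV_minus)

theorem lemma1:
  fixes N :: nat and T E :: real
    and \<alpha> \<beta> L U x0 :: "nat \<Rightarrow> real"
    and \<pi> xh :: "real \<Rightarrow> real"
    and u x :: "nat \<Rightarrow> real \<Rightarrow> real"
    and \<pi>s :: real
    and p q :: "nat \<Rightarrow> real \<Rightarrow> real"
    and \<mu> lm :: "nat \<Rightarrow> real measure"
  assumes N: "N \<ge> 1" and T: "T > 0" and Epos: "E > 0"
    and LU: "\<forall>i<N. L i < U i"
    and xh_gt: "\<forall>t\<in>{0..T}. \<forall>i<N. xh t > U i"
    \<comment> \<open>(A1)\<close>
    and A1_init: "\<forall>i<N. L i \<le> x0 i \<and> x0 i \<le> U i"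
    and A1_E_low: "(LINT t:{0..T}|lborel. (\<Sum>i<N. max 0 (u_over \<alpha> \<beta> xh U i t))) \<le> E"
    and A1_E_up: "E < (LINT t:{0..T}|lborel. (\<Sum>i<N. min (u_under \<alpha> \<beta> xh L i t) 1))"
    and A1_L: "\<forall>i<N. \<forall>t\<in>{0..T}. - \<alpha> i * (L i - xh t) > 0"
    and A1_U: "\<forall>i<N. \<forall>t\<in>{0..T}. - \<alpha> i * (U i - xh t) - \<beta> i < 0"
    \<comment> \<open>(A2)\<close>
    and A2_diff: "\<forall>t\<in>{0..T}. \<pi> differentiable (at t within {0..T}) \<and> xh differentiable (at t within {0..T})"
    and A2_exp: "\<forall>i<N. \<forall>a b. 0 \<le> a \<and> a < b \<and> b \<le> T \<longrightarrow>
                   \<not> (\<exists>A B. \<forall>t\<in>{a..b}. \<pi> t = A * exp (\<alpha> i * t) + B)"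
    \<comment> \<open>optimality\<close>
    and opt: "optimal N T E \<alpha> \<beta> L U x0 xh \<pi> u x"
    \<comment> \<open>multipliers\<close>
    and p_ac: "\<forall>i<N. abs_continuous_on 0 T (p i)"
    and p_deriv: "\<forall>i<N. AE t in lborel. t \<in> {0..T} \<longrightarrow>
                    (p i has_real_derivative (\<alpha> i * q i t)) (at t within {0..T})"
    and mu_meas: "\<forall>i<N. sets (\<mu> i) = sets (restrict_space borel {0..T}) \<and> emeasure (\<mu> i) {0..T} < \<infinity>"
    and ell_meas: "\<forall>i<N. sets (lm i) = sets (restrict_space borel {0..T}) \<and> emeasure (lm i) {0..T} < \<infinity>"
    and q_def: "\<forall>i<N. \<forall>t\<in>{0..<T}. q i t = p i t + measure (\<mu> i) {0..<t} - measure (lm i) {0..<t}"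
    and q_T: "\<forall>i<N. q i T = p i T + measure (\<mu> i) {0..T} - measure (lm i) {0..T} \<and> q i T = 0"
    and supp_ell: "\<forall>i<N. meas_support (lm i) \<subseteq> {t. x i t = L i}"
    and supp_mu: "\<forall>i<N. meas_support (\<mu> i) \<subseteq> {t. x i t = U i}"
    and maxcond: "AE t in lborel. t \<in> {0..T} \<longrightarrow>
                   (\<forall>v::nat \<Rightarrow> real. (\<forall>i<N. 0 \<le> v i \<and> v i \<le> 1) \<longrightarrow>
                      (\<Sum>i<N. (\<pi>s - \<pi> t - \<beta> i * q i t) * u i t)
                        \<ge> (\<Sum>i<N. (\<pi>s - \<pi> t - \<beta> i * q i t) * v i))"
  shows "\<forall>i<N. AE t in lborel. t \<in> {0..T} \<longrightarrow>
           (\<pi>s - \<pi> t - \<beta> i * q i t > 0 \<longrightarrow> u i t = 1) \<and>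
           (\<pi>s - \<pi> t - \<beta> i * q i t < 0 \<longrightarrow> u i t = 0) \<and>
           (\<pi>s - \<pi> t - \<beta> i * q i t = 0 \<and> x i t = L i \<longrightarrow> u i t = u_under \<alpha> \<beta> xh L i t) \<and>
           (\<pi>s - \<pi> t - \<beta> i * q i t = 0 \<and> x i t = U i \<longrightarrow> u i t = u_over \<alpha> \<beta> xh U i t)"
proof (intro allI impI, goal_cases)
  case (1 i)
  then have i: "i < N" .
  have "feasible N T E \<alpha> \<beta> L U x0 xh u x" using opt unfolding optimal_def by blast
  then have u_box: "\<forall>t\<in>{0..T}. \<forall>j\<in>{..<N}. 0 \<le> u j t \<and> u j t \<le> 1"
    and x_bounds: "\<forall>t\<in>{0..T}. L i \<le> x i t \<and> x i t \<le> U i"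
    and x_deriv: "AE t in lborel. t \<in> {0..T} \<longrightarrow>
      (x i has_real_derivative (- \<alpha> i * (x i t - xh t) - \<beta> i * u i t)) (at t within {0..T})"
    using i unfolding feasible_def by auto
  have "0 \<in> {0..T}" using T by simp
  then have "\<alpha> i * (xh 0 - L i) > 0" "\<alpha> i * (xh 0 - U i) < \<beta> i" "xh 0 - U i > 0" "U i > L i"
    using A1_L A1_U xh_gt LU i by (simp_all add: algebra_simps)
  then have "\<alpha> i > 0" "\<beta> i > 0"
    by (auto simp: zero_less_mult_iff) (smt (verit) mult_pos_pos)
  show ?case
    using maxcond x_deriv AE_lborel_singleton[of 0] AE_lborel_singleton[of T]
  proof eventually_elim
    case (elim t)
    show ?case
    proof (intro impI conjI)
      assume t: "t \<in> {0..T}"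
      note bang_bang = box_maximizer_coordinate[of "{..<N}" i "\<lambda>j. u j t" "\<lambda>j. \<pi>s - \<pi> t - \<beta> j * q j t"]
      show "\<pi>s - \<pi> t - \<beta> i * q i t > 0 \<Longrightarrow> u i t = 1" "\<pi>s - \<pi> t - \<beta> i * q i t < 0 \<Longrightarrow> u i t = 0"
        using bang_bang elim(1) t u_box i by auto
      have t_interior: "0 < t" "t < T" using t elim(3,4) by auto
      have x_deriv_t: "(x i has_real_derivative (- \<alpha> i * (x i t - xh t) - \<beta> i * u i t)) (at t within {0..T})"
        using elim(2) t by blast
      show "u i t = u_under \<alpha> \<beta> xh L i t" if "\<pi>s - \<pi> t - \<beta> i * q i t = 0 \<and> x i t = L i"
        using has_real_derivative_interior_min_eq_0[OF x_deriv_t t_interior] that x_bounds \<open>\<beta> i > 0\<close>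
        by (auto simp: u_under_def field_simps)
      show "u i t = u_over \<alpha> \<beta> xh U i t" if "\<pi>s - \<pi> t - \<beta> i * q i t = 0 \<and> x i t = U i"
        using has_real_derivative_interior_max_eq_0[OF x_deriv_t t_interior] that x_bounds \<open>\<beta> i > 0\<close>
        by (auto simp: u_over_def field_simps)
    qed
  qed
qed

end
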